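(* Let $(R,\mathfrak{m})$ be a one-dimensional Cohen–Macaulay local ring. If $I$ is a trace ideal of $R$, then its integral closure $\bar I$ is also a trace ideal.
   Context: For an $R$-module $N$, $\operatorname{tr}(N)$ is the image of $N\otimes_R\operatorname{Hom}_R(N,R)\to R$, $n\otimes\alpha\mapsto\alpha(n)$; an ideal $I$ is a trace ideal if $I=\operatorname{tr}(N)$ for some $R$-module $N$ (equivalently $\operatorname{tr}(I)=I$). $\bar I$ denotes the integral closure of the ideal $I$. *)

theory Defs
  imports Main "HOL-Library.Extended_Nat"
begin

text \<open>Commutative algebra over a commutative ring given as a type 'a :: comm_ring_1
  (the ring R is the whole type).\<close>

definition is_ideal :: "'a::comm_ring_1 set \<Rightarrow> bool" where
  "is_ideal I \<longleftrightarrow> 0 \<in> I \<and> (\<forall>x\<in>I. \<forall>y\<in>I. x + y \<in> I) \<and> (\<forall>r. \<forall>x\<in>I. r * x \<in> I)"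

definition ideal_gen :: "'a::comm_ring_1 set \<Rightarrow> 'a set" where
  "ideal_gen S = \<Inter> {J. is_ideal J \<and> S \<subseteq> J}"

definition ideal_prod :: "'a::comm_ring_1 set \<Rightarrow> 'a set \<Rightarrow> 'a set" where
  "ideal_prod I J = ideal_gen {a * b | a b. a \<in> I \<and> b \<in> J}"

fun ideal_pow :: "'a::comm_ring_1 set \<Rightarrow> nat \<Rightarrow> 'a set" where
  "ideal_pow I 0 = UNIV"
| "ideal_pow I (Suc n) = ideal_prod I (ideal_pow I n)"

definition prime_ideal :: "'a::comm_ring_1 set \<Rightarrow> bool" where
  "prime_ideal P \<longleftrightarrow> is_ideal P \<and> P \<noteq> UNIV \<and> (\<forall>a b. a * b \<in> P \<longrightarrow> a \<in> P \<or> b \<in> P)"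

definition maximal_ideal :: "'a::comm_ring_1 set \<Rightarrow> bool" where
  "maximal_ideal M \<longleftrightarrow> is_ideal M \<and> M \<noteq> UNIV \<and>
     (\<forall>J. is_ideal J \<and> M \<subseteq> J \<longrightarrow> J = M \<or> J = UNIV)"

definition noetherian_ring :: "'a::comm_ring_1 itself \<Rightarrow> bool" where
  "noetherian_ring _ \<longleftrightarrow> (\<forall>I::'a set. is_ideal I \<longrightarrow> (\<exists>S. finite S \<and> I = ideal_gen S))"

definition local_ring_with_max :: "'a::comm_ring_1 set \<Rightarrow> bool" where
  "local_ring_with_max m \<longleftrightarrow> maximal_ideal m \<and> (\<forall>J. maximal_ideal J \<longrightarrow> J = m)"

definition krull_dim :: "'a::comm_ring_1 itself \<Rightarrow> enat" where
  "krull_dim _ = Sup {enat n | n. \<exists>P :: nat \<Rightarrow> 'a set.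
      (\<forall>i\<le>n. prime_ideal (P i)) \<and> (\<forall>i<n. P i \<subset> P (Suc i))}"

definition regular_seq_in :: "'a::comm_ring_1 set \<Rightarrow> 'a list \<Rightarrow> bool" where
  "regular_seq_in m xs \<longleftrightarrow> set xs \<subseteq> m \<and> ideal_gen (set xs) \<noteq> UNIV \<and>
     (\<forall>i<length xs. \<forall>y. xs ! i * y \<in> ideal_gen (set (take i xs)) \<longrightarrow> y \<in> ideal_gen (set (take i xs)))"

definition depth_of :: "'a::comm_ring_1 set \<Rightarrow> enat" where
  "depth_of m = Sup {enat (length xs) | xs. regular_seq_in m xs}"

definition cohen_macaulay_local :: "'a::comm_ring_1 set \<Rightarrow> bool" where
  "cohen_macaulay_local m \<longleftrightarrow> noetherian_ring TYPE('a) \<and> local_ring_with_max m \<and>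
     depth_of m = krull_dim TYPE('a)"

text \<open>R-linear maps I \<rightarrow> R (only values on I matter).\<close>
definition linear_on :: "'a::comm_ring_1 set \<Rightarrow> ('a \<Rightarrow> 'a) \<Rightarrow> bool" where
  "linear_on I f \<longleftrightarrow> (\<forall>x\<in>I. \<forall>y\<in>I. f (x + y) = f x + f y) \<and> (\<forall>r. \<forall>x\<in>I. f (r * x) = r * f x)"

text \<open>Trace of an ideal I: image of I \<otimes> Hom(I,R) \<rightarrow> R, i.e. the ideal generated by all
  \<alpha>(x) with \<alpha> \<in> Hom(I,R), x \<in> I.\<close>
definition trace_ideal_of :: "'a::comm_ring_1 set \<Rightarrow> 'a set" where
  "trace_ideal_of I = ideal_gen {f x | f x. linear_on I f \<and> x \<in> I}"

definition is_trace_ideal :: "'a::comm_ring_1 set \<Rightarrow> bool" where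
  "is_trace_ideal I \<longleftrightarrow> is_ideal I \<and> trace_ideal_of I = I"

definition integral_closure_ideal :: "'a::comm_ring_1 set \<Rightarrow> 'a set" where
  "integral_closure_ideal I = {x. \<exists>n\<ge>1. \<exists>a :: nat \<Rightarrow> 'a.
      (\<forall>i\<in>{1..n}. a i \<in> ideal_pow I i) \<and> x ^ n + (\<Sum>i=1..n. a i * x ^ (n - i)) = 0}"

end

(*
  Let J be the integral closure of I and f : J -> R an R-linear map. Restricted to I, f maps I
  into tr(I) = I, hence I^k into I^k, because f(c d) = d f(c) for c in I. Given an equation
  x^n + a_1 x^(n-1) + ... + a_n = 0 with a_i in I^i, apply f to it n times, each time either to
  one factor x of a term (f(r x) = r f(x)) or, once a term has no x left, to its coefficient.
  This yields f(x)^n + f(a_1) f(x)^(n-1) + ... + f^n(a_n) = 0, so f(x) lies in J and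
  tr(J) = J. That J is an ideal is the classical argument: x lies in J iff x t is integral over
  the Rees algebra R[It], and sums of integral elements are integral by the determinant trick.
*)

theory Submission
  imports Defs "Jordan_Normal_Form.Char_Poly"
begin

section \<open>Ideals and their powers\<close>

lemma is_ideal_ideal_gen: "is_ideal (ideal_gen S)"
  unfolding ideal_gen_def is_ideal_def by auto

lemma ideal_gen_superset: "S \<subseteq> ideal_gen S"
  unfolding ideal_gen_def by auto

lemma ideal_gen_least: "is_ideal J \<Longrightarrow> S \<subseteq> J \<Longrightarrow> ideal_gen S \<subseteq> J"
  unfolding ideal_gen_def by auto

lemma ideal_gen_induct [consumes 1, case_names zero add mult gen]:
  assumes x: "x \<in> ideal_gen S"
    and zero: "P 0"
    and add: "\<And>x y. x \<in> ideal_gen S \<Longrightarrow> y \<in> ideal_gen S \<Longrightarrow> P x \<Longrightarrow> P y \<Longrightarrow> P (x + y)"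
    and mult: "\<And>r x. x \<in> ideal_gen S \<Longrightarrow> P x \<Longrightarrow> P (r * x)"
    and gen: "\<And>s. s \<in> S \<Longrightarrow> P s"
  shows "P x"
proof -
  have "is_ideal {x \<in> ideal_gen S. P x}"
    using is_ideal_ideal_gen[of S] zero add mult unfolding is_ideal_def by auto
  moreover have "S \<subseteq> {x \<in> ideal_gen S. P x}"
    using ideal_gen_superset gen by blast
  ultimately show ?thesis
    using ideal_gen_least x by blast
qed

lemma is_ideal_0: "is_ideal J \<Longrightarrow> 0 \<in> J"
  unfolding is_ideal_def by auto

lemma is_ideal_add: "is_ideal J \<Longrightarrow> x \<in> J \<Longrightarrow> y \<in> J \<Longrightarrow> x + y \<in> J"
  unfolding is_ideal_def by auto

lemma is_ideal_mult_left: "is_ideal J \<Longrightarrow> x \<in> J \<Longrightarrow> r * x \<in> J"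
  unfolding is_ideal_def by auto

lemma is_ideal_mult_right: "is_ideal J \<Longrightarrow> x \<in> J \<Longrightarrow> x * r \<in> J"
  using is_ideal_mult_left[of J x r] by (simp add: mult.commute)

lemma is_ideal_uminus: "is_ideal J \<Longrightarrow> x \<in> J \<Longrightarrow> - x \<in> J"
  using is_ideal_mult_left[of J x "- 1"] by simp

lemma is_ideal_sum: "is_ideal J \<Longrightarrow> (\<And>i. i \<in> F \<Longrightarrow> f i \<in> J) \<Longrightarrow> sum f F \<in> J"
  by (induction F rule: infinite_finite_induct) (auto intro: is_ideal_0 is_ideal_add)

lemma ideal_pow_Suc: "ideal_pow I (Suc k) = ideal_gen {a * b | a b. a \<in> I \<and> b \<in> ideal_pow I k}"
  by (simp add: ideal_prod_def)

declare ideal_pow.simps(2) [simp del]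

lemma is_ideal_ideal_pow: "is_ideal (ideal_pow I k)"
proof (cases k)
  case 0
  then show ?thesis by (simp add: is_ideal_def)
next
  case (Suc l)
  then show ?thesis by (simp only: ideal_pow_Suc is_ideal_ideal_gen)
qed

lemma mult_mem_ideal_pow_Suc:
  assumes "a \<in> I" "b \<in> ideal_pow I k"
  shows "a * b \<in> ideal_pow I (Suc k)"
proof -
  have "a * b \<in> {a * b | a b. a \<in> I \<and> b \<in> ideal_pow I k}"
    using assms by blast
  then show ?thesis
    unfolding ideal_pow_Suc by (rule subsetD[OF ideal_gen_superset])
qed

lemma ideal_pow_mult:
  "a \<in> ideal_pow I i \<Longrightarrow> b \<in> ideal_pow I j \<Longrightarrow> a * b \<in> ideal_pow I (i + j)"
proof (induction i arbitrary: a)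
  case 0
  then show ?case
    using is_ideal_mult_left[OF is_ideal_ideal_pow] by simp
next
  case (Suc i)
  from Suc.prems(1) show ?case
    unfolding ideal_pow_Suc[of I i]
  proof (induction rule: ideal_gen_induct)
    case zero
    show ?case using is_ideal_0[OF is_ideal_ideal_pow] by simp
  next
    case (add x y)
    then show ?case using is_ideal_add[OF is_ideal_ideal_pow] by (simp add: distrib_right)
  next
    case (mult r x)
    then show ?case using is_ideal_mult_left[OF is_ideal_ideal_pow] by (simp add: mult.assoc)
  next
    case (gen s)
    then obtain c d where s: "s = c * d" and "c \<in> I" "d \<in> ideal_pow I i"
      by blast
    then have "c * (d * b) \<in> ideal_pow I (Suc (i + j))"
      using Suc.IH Suc.prems(2) by (intro mult_mem_ideal_pow_Suc) auto
    then show ?case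
      using s by (simp add: mult.assoc)
  qed
qed

lemma ideal_pow_subset:
  assumes I: "is_ideal I" and k: "1 \<le> k"
  shows "ideal_pow I k \<subseteq> I"
proof -
  obtain l where "k = Suc l"
    using k by (cases k) auto
  then show ?thesis
    unfolding \<open>k = Suc l\<close> ideal_pow_Suc using I by (intro ideal_gen_least) (auto intro: is_ideal_mult_right)
qed

lemma ideal_pow_1: "is_ideal I \<Longrightarrow> ideal_pow I 1 = I"
  using ideal_pow_subset[of I 1] mult_mem_ideal_pow_Suc[of _ I 1 0] by fastforce

section \<open>Integral elements over a subring\<close>

definition is_subring :: "'a::comm_ring_1 set \<Rightarrow> bool" where
  "is_subring A \<longleftrightarrow> 0 \<in> A \<and> 1 \<in> A \<and> (\<forall>a\<in>A. - a \<in> A) \<and> (\<forall>a\<in>A. \<forall>b\<in>A. a + b \<in> A \<and> a * b \<in> A)"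

definition poly_over :: "'a::comm_ring_1 set \<Rightarrow> 'a poly set" where
  "poly_over A = {p. \<forall>i. coeff p i \<in> A}"

definition integral_over :: "'a::comm_ring_1 set \<Rightarrow> 'a \<Rightarrow> bool" where
  "integral_over A u \<longleftrightarrow> (\<exists>n\<ge>1. \<exists>c. (\<forall>i. c i \<in> A) \<and> u ^ n = (\<Sum>i<n. c i * u ^ i))"

definition span_over :: "'a::comm_ring_1 set \<Rightarrow> (nat \<Rightarrow> 'a) \<Rightarrow> nat \<Rightarrow> 'a set" where
  "span_over A g K = {x. \<exists>c. (\<forall>i. c i \<in> A) \<and> x = (\<Sum>i<K. c i * g i)}"

lemma subring_sum: "is_subring A \<Longrightarrow> (\<And>i. i \<in> F \<Longrightarrow> f i \<in> A) \<Longrightarrow> sum f F \<in> A"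
  by (induction F rule: infinite_finite_induct) (auto simp: is_subring_def)

lemma subring_prod: "is_subring A \<Longrightarrow> (\<And>i. i \<in> F \<Longrightarrow> f i \<in> A) \<Longrightarrow> prod f F \<in> A"
  by (induction F rule: infinite_finite_induct) (auto simp: is_subring_def)

lemma subring_det:
  assumes A: "is_subring A" and M: "M \<in> carrier_mat n n"
    and entries: "\<And>i j. i < n \<Longrightarrow> j < n \<Longrightarrow> M $$ (i, j) \<in> A"
  shows "det M \<in> A"
  unfolding det_def'[OF M]
proof (rule subring_sum[OF A])
  fix p assume "p \<in> {p. p permutes {0..<n}}"
  then have "(\<Prod>i = 0..<n. M $$ (i, p i)) \<in> A"
    using entries by (intro subring_prod[OF A]) (auto simp: permutes_in_image)
  moreover have "signof p \<in> A"
    using A by (cases p rule: sign_cases) (auto simp: is_subring_def)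
  ultimately show "signof p * (\<Prod>i = 0..<n. M $$ (i, p i)) \<in> A"
    using A by (simp add: is_subring_def)
qed

lemma is_subring_poly_over: "is_subring A \<Longrightarrow> is_subring (poly_over A)"
proof -
  assume A: "is_subring A"
  have "coeff (p * q) i \<in> A" if "p \<in> poly_over A" "q \<in> poly_over A" for p q i
    unfolding coeff_mult using that A by (intro subring_sum) (auto simp: poly_over_def is_subring_def)
  moreover have "coeff 1 i \<in> A" for i
    using A by (cases i) (auto simp: is_subring_def)
  ultimately show ?thesis
    using A unfolding is_subring_def poly_over_def by auto
qed

lemma char_poly_in_poly_over:
  assumes A: "is_subring A" and C: "C \<in> carrier_mat n n"
    and entries: "\<And>i j. i < n \<Longrightarrow> j < n \<Longrightarrow> C $$ (i, j) \<in> A"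
  shows "char_poly C \<in> poly_over A"
  unfolding char_poly_def
proof (rule subring_det[OF is_subring_poly_over[OF A]])
  show "char_poly_matrix C \<in> carrier_mat n n"
    using C by simp
  fix i j assume ij: "i < n" "j < n"
  have "coeff (char_poly_matrix C $$ (i, j)) k \<in> A" for k
    using ij C entries[OF ij] A
    by (cases k; cases "k - 1") (auto simp: char_poly_matrix_def is_subring_def)
  then show "char_poly_matrix C $$ (i, j) \<in> poly_over A"
    by (simp add: poly_over_def)
qed

lemma integral_over_if_monic_root:
  assumes A: "is_subring A" and P: "P \<in> poly_over A" and monic: "lead_coeff P = 1"
    and root: "poly P u = 0"
  shows "integral_over A u"
proof -
  define n where "n = degree P"
  have "0 = (\<Sum>i\<le>n. coeff P i * u ^ i)"
    using root by (simp add: poly_altdef n_def)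
  also have "\<dots> = u ^ n + (\<Sum>i<n. coeff P i * u ^ i)"
    using monic by (simp add: n_def lessThan_Suc_atMost[symmetric])
  finally have eq: "u ^ n = (\<Sum>i<n. - coeff P i * u ^ i)"
    by (simp add: sum_negf eq_neg_iff_add_eq_0)
  moreover have "n \<noteq> 0"
    using eq by (cases n) simp_all
  moreover have "- coeff P i \<in> A" for i
    using A P by (simp add: is_subring_def poly_over_def)
  ultimately show ?thesis
    unfolding integral_over_def by (intro exI[of _ n] conjI exI[of _ "\<lambda>i. - coeff P i"]) auto
qed

text \<open>The ring need not be a domain, so \<open>e \<noteq> 0\<close> would not suffice: a coordinate equal to \<open>1\<close>
  is what lets Cramer's rule force \<open>det (u - C) = 0\<close>.\<close>

lemma char_poly_root_if_eigenvector:
  fixes C :: "'a::comm_ring_1 mat"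
  assumes C: "C \<in> carrier_mat N N" and e: "e \<in> carrier_vec N" and Ce: "C *\<^sub>v e = u \<cdot>\<^sub>v e"
    and k: "k < N" and ek: "e $ k = 1"
  shows "poly (char_poly C) u = 0"
proof -
  define M where "M = u \<cdot>\<^sub>m 1\<^sub>m N - C"
  have M: "M \<in> carrier_mat N N"
    using C by (simp add: M_def minus_carrier_mat)
  have "M *\<^sub>v e = (u \<cdot>\<^sub>m 1\<^sub>m N) *\<^sub>v e - C *\<^sub>v e"
    unfolding M_def using C e by (intro minus_mult_distrib_mat_vec) auto
  also have "(u \<cdot>\<^sub>m 1\<^sub>m N) *\<^sub>v e = u \<cdot>\<^sub>v (1\<^sub>m N *\<^sub>v e)"
    using e by auto
  finally have "M *\<^sub>v e = 0\<^sub>v N"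
    using e Ce by simp
  then have "det M = det (replace_col M (0\<^sub>v N) k)"
    using cramer_lemma_mat[OF M e k] ek by simp
  also have "\<dots> = 0"
    using M k by (subst laplace_expansion_column[of _ N k]) (auto simp: replace_col_def)
  also have "det M = poly (char_poly C) u"
  proof -
    have "M = map_mat (\<lambda>p. poly p u) (char_poly_matrix C)"
      using C by (intro eq_matI) (auto simp: M_def char_poly_matrix_def)
    moreover have "comm_ring_hom (\<lambda>p. poly p u)"
      by unfold_locales auto
    ultimately show ?thesis
      unfolding char_poly_def by (simp add: comm_ring_hom.hom_det)
  qed
  finally show ?thesis .
qed

lemma span_over_0: "is_subring A \<Longrightarrow> 0 \<in> span_over A g K"
  unfolding span_over_def is_subring_def by (intro CollectI exI[of _ "\<lambda>_. 0"]) auto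

lemma span_over_add:
  assumes A: "is_subring A" and "x \<in> span_over A g K" "y \<in> span_over A g K"
  shows "x + y \<in> span_over A g K"
proof -
  obtain a b where "\<forall>i. a i \<in> A" "x = (\<Sum>i<K. a i * g i)" "\<forall>i. b i \<in> A" "y = (\<Sum>i<K. b i * g i)"
    using assms(2,3) unfolding span_over_def by blast
  then show ?thesis
    using A unfolding span_over_def is_subring_def
    by (intro CollectI exI[of _ "\<lambda>i. a i + b i"]) (auto simp: sum.distrib distrib_right)
qed

lemma span_over_mult:
  assumes A: "is_subring A" and "r \<in> A" "x \<in> span_over A g K"
  shows "r * x \<in> span_over A g K"
proof -
  obtain a where "\<forall>i. a i \<in> A" "x = (\<Sum>i<K. a i * g i)"
    using assms(3) unfolding span_over_def by blast
  then show ?thesis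
    using A \<open>r \<in> A\<close> unfolding span_over_def is_subring_def
    by (intro CollectI exI[of _ "\<lambda>i. r * a i"]) (auto simp: sum_distrib_left mult.assoc)
qed

lemma span_over_sum:
  "is_subring A \<Longrightarrow> (\<And>i. i \<in> F \<Longrightarrow> f i \<in> span_over A g K) \<Longrightarrow> sum f F \<in> span_over A g K"
  by (induction F rule: infinite_finite_induct) (auto intro: span_over_0 span_over_add)

lemma span_over_generator:
  assumes A: "is_subring A" and j: "j < K"
  shows "g j \<in> span_over A g K"
proof -
  have "(\<Sum>i<K. (if i = j then 1 else 0) * g i) = g j"
    using j by (simp add: if_distrib[where f = "\<lambda>x. x * _"] cong: if_cong)
  then show ?thesis
    using A unfolding span_over_def is_subring_def
    by (intro CollectI exI[of _ "\<lambda>i. if i = j then 1 else 0"]) auto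
qed

lemma power_mem_span_over:
  assumes A: "is_subring A" and n: "1 \<le> n" and c: "\<And>i. c i \<in> A"
    and eq: "u ^ n = (\<Sum>i<n. c i * u ^ i)"
  shows "u ^ k \<in> span_over A (\<lambda>i. u ^ i) n"
proof (induction k)
  case 0
  show ?case
    using span_over_generator[OF A, of 0 n "\<lambda>i. u ^ i"] n by simp
next
  case (Suc k)
  then obtain a where a: "\<And>i. a i \<in> A" and uk: "u ^ k = (\<Sum>i<n. a i * u ^ i)"
    unfolding span_over_def by blast
  have "u ^ Suc i \<in> span_over A (\<lambda>i. u ^ i) n" if "i < n" for i
  proof (cases "Suc i < n")
    case True
    then show ?thesis using span_over_generator[OF A True, of "\<lambda>i. u ^ i"] by simp
  next
    case False
    then have "Suc i = n"
      using that by simp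
    then have "u ^ Suc i = (\<Sum>i<n. c i * u ^ i)"
      using eq by (simp only:)
    then show ?thesis
      using c unfolding span_over_def by blast
  qed
  then have "(\<Sum>i<n. a i * u ^ Suc i) \<in> span_over A (\<lambda>i. u ^ i) n"
    using a by (intro span_over_sum[OF A] span_over_mult[OF A]) auto
  moreover have "u ^ Suc k = (\<Sum>i<n. a i * u ^ Suc i)"
    using uk by (simp add: sum_distrib_left ac_simps)
  ultimately show ?case
    by simp
qed

lemma integral_over_if_stable_span:
  assumes A: "is_subring A" and K: "0 < K" and g0: "g 0 = 1"
    and stable: "\<And>p. p < K \<Longrightarrow> w * g p \<in> span_over A g K"
  shows "integral_over A w"
proof -
  have "\<forall>p\<in>{..<K}. \<exists>c. (\<forall>i. c i \<in> A) \<and> w * g p = (\<Sum>i<K. c i * g i)"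
    using stable unfolding span_over_def by blast
  then obtain c where c: "\<And>p i. p < K \<Longrightarrow> c p i \<in> A"
    and wg: "\<And>p. p < K \<Longrightarrow> w * g p = (\<Sum>i<K. c p i * g i)"
    by (metis lessThan_iff bchoice)
  define C where "C = mat K K (\<lambda>(p, q). c p q)"
  define e where "e = vec K g"
  have C: "C \<in> carrier_mat K K"
    by (simp add: C_def)
  have "C *\<^sub>v e = w \<cdot>\<^sub>v e"
    by (rule eq_vecI) (auto simp: C_def e_def scalar_prod_def atLeast0LessThan wg)
  then have "poly (char_poly C) w = 0"
    using K g0 by (intro char_poly_root_if_eigenvector[OF C, of e w 0]) (auto simp: e_def)
  moreover have "char_poly C \<in> poly_over A"
    using c by (intro char_poly_in_poly_over[OF A C]) (simp add: C_def)
  moreover have "lead_coeff (char_poly C) = 1"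
    using degree_monic_char_poly[OF C] by simp
  ultimately show ?thesis
    by (intro integral_over_if_monic_root[OF A])
qed

lemma power_mult_power_mem_span_over:
  assumes A: "is_subring A"
    and n: "1 \<le> n" and c: "\<And>i. c i \<in> A" and u_eq: "u ^ n = (\<Sum>i<n. c i * u ^ i)"
    and m: "1 \<le> m" and d: "\<And>i. d i \<in> A" and v_eq: "v ^ m = (\<Sum>i<m. d i * v ^ i)"
  shows "u ^ a * v ^ b \<in> span_over A (\<lambda>p. u ^ (p div m) * v ^ (p mod m)) (n * m)"
    (is "_ \<in> span_over A ?g (n * m)")
proof -
  have generator: "u ^ i * v ^ j \<in> span_over A ?g (n * m)" if "i < n" "j < m" for i j
  proof -
    have "i * m + j < Suc i * m"
      using that by simp
    also have "\<dots> \<le> n * m"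
      using that by (intro mult_le_mono1) simp
    finally have "i * m + j < n * m" .
    moreover have "?g (i * m + j) = u ^ i * v ^ j"
      using that by simp
    ultimately show ?thesis
      using span_over_generator[OF A, of "i * m + j" "n * m" ?g] by simp
  qed
  obtain a' b' where a': "\<And>i. a' i \<in> A" "u ^ a = (\<Sum>i<n. a' i * u ^ i)"
    and b': "\<And>j. b' j \<in> A" "v ^ b = (\<Sum>j<m. b' j * v ^ j)"
    using power_mem_span_over[OF A n c u_eq, of a] power_mem_span_over[OF A m d v_eq, of b]
    unfolding span_over_def by blast
  have "u ^ a * v ^ b = (\<Sum>i<n. \<Sum>j<m. (a' i * b' j) * (u ^ i * v ^ j))"
    unfolding a'(2) b'(2) sum_product by (simp add: ac_simps)
  also have "\<dots> \<in> span_over A ?g (n * m)"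
  proof (intro span_over_sum[OF A])
    fix i j assume "i \<in> {..<n}" "j \<in> {..<m}"
    moreover have "a' i * b' j \<in> A"
      using A a'(1) b'(1) by (simp add: is_subring_def)
    ultimately show "(a' i * b' j) * (u ^ i * v ^ j) \<in> span_over A ?g (n * m)"
      using span_over_mult[OF A _ generator] by simp
  qed
  finally show ?thesis .
qed

lemma integral_over_add:
  assumes A: "is_subring A" and u: "integral_over A u" and v: "integral_over A v"
  shows "integral_over A (u + v)"
proof -
  obtain n c where n: "1 \<le> n" and c: "\<And>i. c i \<in> A" and u_eq: "u ^ n = (\<Sum>i<n. c i * u ^ i)"
    using u unfolding integral_over_def by blast
  obtain m d where m: "1 \<le> m" and d: "\<And>i. d i \<in> A" and v_eq: "v ^ m = (\<Sum>i<m. d i * v ^ i)"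
    using v unfolding integral_over_def by blast
  \<comment> \<open>\<open>g (i * m + j) = u\<^sup>i v\<^sup>j\<close>: these monomials span \<open>A[u, v]\<close> as an \<open>A\<close>-module\<close>
  define g where "g p = u ^ (p div m) * v ^ (p mod m)" for p
  have monomial: "u ^ a * v ^ b \<in> span_over A g (n * m)" for a b
    unfolding g_def by (rule power_mult_power_mem_span_over[OF A n c u_eq m d v_eq])
  show ?thesis
  proof (rule integral_over_if_stable_span[OF A])
    show "0 < n * m" "g 0 = 1"
      using n m by (simp_all add: g_def)
    fix p
    have "(u + v) * g p = u ^ Suc (p div m) * v ^ (p mod m) + u ^ (p div m) * v ^ Suc (p mod m)"
      by (simp add: g_def algebra_simps)
    then show "(u + v) * g p \<in> span_over A g (n * m)"
      using span_over_add[OF A monomial monomial] by (simp only:)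
  qed
qed

section \<open>The integral closure of an ideal\<close>

text \<open>The Rees algebra \<open>R[It] = \<Oplus>\<^sub>i I\<^sup>i t\<^sup>i\<close> as a subring of \<open>R[t]\<close>.\<close>

definition rees_algebra :: "'a::comm_ring_1 set \<Rightarrow> 'a poly set" where
  "rees_algebra I = {p. \<forall>i. coeff p i \<in> ideal_pow I i}"

lemma is_subring_rees_algebra: "is_subring (rees_algebra I)"
proof -
  have "coeff (p * q) i \<in> ideal_pow I i" if "p \<in> rees_algebra I" "q \<in> rees_algebra I" for p q i
    unfolding coeff_mult
  proof (rule is_ideal_sum[OF is_ideal_ideal_pow])
    fix j assume "j \<in> {..i}"
    then have "j + (i - j) = i" by simp
    then show "coeff p j * coeff q (i - j) \<in> ideal_pow I i"
      using ideal_pow_mult[of "coeff p j" I j "coeff q (i - j)" "i - j"] that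
      by (simp add: rees_algebra_def)
  qed
  moreover have "coeff 1 i \<in> ideal_pow I i" for i
    by (cases i) (simp_all add: is_ideal_0[OF is_ideal_ideal_pow])
  ultimately show ?thesis
    unfolding is_subring_def rees_algebra_def
    by (auto intro: is_ideal_0 is_ideal_add is_ideal_uminus is_ideal_ideal_pow)
qed

lemma sum_atLeast1_atMost_reflect: "(\<Sum>i=1..n. g (n - i)) = (\<Sum>j<n. g j)" for n :: nat
  by (rule sum.reindex_bij_witness[of _ "\<lambda>j. n - j" "\<lambda>i. n - i"]) auto

lemma integral_over_rees_algebra_if_mem_integral_closure:
  assumes "x \<in> integral_closure_ideal I"
  shows "integral_over (rees_algebra I) (monom x 1)"
proof -
  obtain n a where n: "1 \<le> n" and a: "\<forall>i\<in>{1..n}. a i \<in> ideal_pow I i"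
    and eq: "x ^ n + (\<Sum>i=1..n. a i * x ^ (n - i)) = 0"
    using assms unfolding integral_closure_ideal_def by blast
  define c where "c j = monom (- a (n - j)) (n - j)" for j
  have "c j \<in> rees_algebra I" for j
  proof (cases "j < n")
    case True
    then have "a (n - j) \<in> ideal_pow I (n - j)"
      using a by simp
    then show ?thesis
      by (simp add: c_def rees_algebra_def is_ideal_uminus is_ideal_0 is_ideal_ideal_pow)
  next
    case False
    then show ?thesis
      by (simp add: c_def rees_algebra_def is_ideal_0 is_ideal_ideal_pow)
  qed
  moreover have "monom x 1 ^ n = (\<Sum>j<n. c j * monom x 1 ^ j)"
  proof -
    have "(\<Sum>j<n. c j * monom x 1 ^ j) = (\<Sum>j<n. monom (- (a (n - j) * x ^ j)) n)"
      by (rule sum.cong) (simp_all add: c_def monom_power mult_monom)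
    also have "\<dots> = monom (- (\<Sum>j<n. a (n - j) * x ^ j)) n"
      by (simp only: sum_negf[symmetric] monom_sum)
    also have "(\<Sum>j<n. a (n - j) * x ^ j) = (\<Sum>i=1..n. a i * x ^ (n - i))"
      unfolding sum_atLeast1_atMost_reflect[of "\<lambda>j. a (n - j) * x ^ j", symmetric]
      by (rule sum.cong) simp_all
    also have "- (\<Sum>i=1..n. a i * x ^ (n - i)) = x ^ n"
      using eq by (simp add: add_eq_0_iff)
    finally show ?thesis
      by (simp add: monom_power)
  qed
  ultimately show ?thesis
    unfolding integral_over_def using n by blast
qed

lemma mem_integral_closure_if_integral_over_rees_algebra:
  assumes "integral_over (rees_algebra I) (monom x 1)"
  shows "x \<in> integral_closure_ideal I"
proof -
  obtain n c where n: "1 \<le> n" and c: "\<And>j. c j \<in> rees_algebra I"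
    and eq: "monom x 1 ^ n = (\<Sum>j<n. c j * monom x 1 ^ j)"
    using assms unfolding integral_over_def by blast
  define a where "a i = - coeff (c (n - i)) i" for i
  have "x ^ n = coeff (monom x 1 ^ n) n"
    by (simp add: monom_power)
  also have "\<dots> = coeff (\<Sum>j<n. c j * monom x 1 ^ j) n"
    by (simp only: eq)
  also have "\<dots> = (\<Sum>j<n. coeff (c j) (n - j) * x ^ j)"
    by (simp add: coeff_sum monom_power mult.commute[of "c _"] coeff_monom_mult mult.commute[of "x ^ _"])
  also have "\<dots> = (\<Sum>i=1..n. coeff (c (n - i)) i * x ^ (n - i))"
    unfolding sum_atLeast1_atMost_reflect[of "\<lambda>j. coeff (c j) (n - j) * x ^ j", symmetric]
    by (rule sum.cong) simp_all
  also have "\<dots> = - (\<Sum>i=1..n. a i * x ^ (n - i))"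
    by (simp add: a_def sum_negf)
  finally have "x ^ n + (\<Sum>i=1..n. a i * x ^ (n - i)) = 0"
    by simp
  moreover have "a i \<in> ideal_pow I i" for i
    using c by (simp add: a_def rees_algebra_def is_ideal_uminus is_ideal_ideal_pow)
  ultimately show ?thesis
    unfolding integral_closure_ideal_def using n by blast
qed

lemma integral_closure_ideal_add:
  assumes "x \<in> integral_closure_ideal I" "y \<in> integral_closure_ideal I"
  shows "x + y \<in> integral_closure_ideal I"
  using integral_over_add[OF is_subring_rees_algebra
      integral_over_rees_algebra_if_mem_integral_closure[OF assms(1)]
      integral_over_rees_algebra_if_mem_integral_closure[OF assms(2)]]
  by (intro mem_integral_closure_if_integral_over_rees_algebra) (simp add: add_monom)

lemma integral_closure_ideal_mult:
  assumes "x \<in> integral_closure_ideal I"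
  shows "r * x \<in> integral_closure_ideal I"
proof -
  obtain n a where n: "1 \<le> n" and a: "\<forall>i\<in>{1..n}. a i \<in> ideal_pow I i"
    and eq: "x ^ n + (\<Sum>i=1..n. a i * x ^ (n - i)) = 0"
    using assms unfolding integral_closure_ideal_def by blast
  have "(r ^ i * a i) * (r * x) ^ (n - i) = r ^ n * (a i * x ^ (n - i))" if "i \<le> n" for i
  proof -
    have "(r ^ i * a i) * (r * x) ^ (n - i) = (r ^ i * r ^ (n - i)) * (a i * x ^ (n - i))"
      by (simp add: power_mult_distrib ac_simps)
    also have "r ^ i * r ^ (n - i) = r ^ n"
      using that by (simp flip: power_add)
    finally show ?thesis .
  qed
  then have "(\<Sum>i=1..n. (r ^ i * a i) * (r * x) ^ (n - i)) = r ^ n * (\<Sum>i=1..n. a i * x ^ (n - i))"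
    unfolding sum_distrib_left by (intro sum.cong) simp_all
  then have "(r * x) ^ n + (\<Sum>i=1..n. (r ^ i * a i) * (r * x) ^ (n - i))
      = r ^ n * (x ^ n + (\<Sum>i=1..n. a i * x ^ (n - i)))"
    by (simp add: distrib_left power_mult_distrib)
  also have "\<dots> = 0"
    using eq by simp
  finally show ?thesis
    unfolding integral_closure_ideal_def using n a
    by (intro CollectI exI[of _ n] conjI exI[of _ "\<lambda>i. r ^ i * a i"])
      (auto intro: is_ideal_mult_left[OF is_ideal_ideal_pow])
qed

lemma zero_mem_integral_closure_ideal: "0 \<in> integral_closure_ideal I"
  unfolding integral_closure_ideal_def
  by (intro CollectI exI[of _ 1] conjI exI[of _ "\<lambda>_. 0"]) (simp_all add: is_ideal_0 is_ideal_ideal_pow)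

lemma is_ideal_integral_closure_ideal: "is_ideal (integral_closure_ideal I)"
  unfolding is_ideal_def
  using zero_mem_integral_closure_ideal integral_closure_ideal_add integral_closure_ideal_mult by blast

lemma ideal_subset_integral_closure_ideal:
  assumes "is_ideal I"
  shows "I \<subseteq> integral_closure_ideal I"
proof
  fix x assume "x \<in> I"
  then show "x \<in> integral_closure_ideal I"
    unfolding integral_closure_ideal_def using assms ideal_pow_1[OF assms]
    by (intro CollectI exI[of _ 1] conjI exI[of _ "\<lambda>_. - x"]) (auto intro: is_ideal_uminus)
qed

section \<open>Trace ideals\<close>

lemma linear_on_subset: "linear_on J f \<Longrightarrow> I \<subseteq> J \<Longrightarrow> linear_on I f"
  unfolding linear_on_def by blast

lemma linear_on_0:
  assumes "is_ideal J" "linear_on J f"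
  shows "f 0 = 0"
proof -
  have "f (0 * 0) = 0 * f 0"
    using assms is_ideal_0 unfolding linear_on_def by blast
  then show ?thesis
    by simp
qed

lemma linear_on_sum:
  assumes J: "is_ideal J" and f: "linear_on J f"
  shows "(\<And>i. i \<in> F \<Longrightarrow> h i \<in> J) \<Longrightarrow> f (sum h F) = (\<Sum>i\<in>F. f (h i))"
proof (induction F rule: infinite_finite_induct)
  case (insert i F)
  have "h i \<in> J" "sum h F \<in> J"
    using insert.prems by (auto intro: is_ideal_sum[OF J])
  then have "f (h i + sum h F) = f (h i) + f (sum h F)"
    using f unfolding linear_on_def by blast
  then show ?case
    using insert by simp
qed (simp_all add: linear_on_0[OF J f])

lemma mem_trace_ideal_of:
  assumes "linear_on I f" "x \<in> I"
  shows "f x \<in> trace_ideal_of I"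
proof -
  have "f x \<in> {f x | f x. linear_on I f \<and> x \<in> I}"
    using assms by blast
  then show ?thesis
    unfolding trace_ideal_of_def by (rule subsetD[OF ideal_gen_superset])
qed

lemma is_trace_ideal_iff:
  assumes I: "is_ideal I"
  shows "is_trace_ideal I \<longleftrightarrow> (\<forall>f x. linear_on I f \<longrightarrow> x \<in> I \<longrightarrow> f x \<in> I)"
proof
  assume "is_trace_ideal I"
  then show "\<forall>f x. linear_on I f \<longrightarrow> x \<in> I \<longrightarrow> f x \<in> I"
    using mem_trace_ideal_of unfolding is_trace_ideal_def by metis
next
  assume closed: "\<forall>f x. linear_on I f \<longrightarrow> x \<in> I \<longrightarrow> f x \<in> I"
  have "trace_ideal_of I \<subseteq> I"
    unfolding trace_ideal_of_def using closed by (intro ideal_gen_least[OF I]) blast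
  moreover have "I \<subseteq> trace_ideal_of I"
  proof
    fix x assume "x \<in> I"
    then show "x \<in> trace_ideal_of I"
      using mem_trace_ideal_of[of I id x] by (simp add: linear_on_def)
  qed
  ultimately show "is_trace_ideal I"
    unfolding is_trace_ideal_def using I by simp
qed

lemma trace_ideal_linear_on_ideal_pow_closed:
  assumes tr: "is_trace_ideal I" and f: "linear_on I f" and b: "b \<in> ideal_pow I (Suc k)"
  shows "f b \<in> ideal_pow I (Suc k)"
proof -
  have I: "is_ideal I"
    using tr by (simp add: is_trace_ideal_def)
  have f_I: "f c \<in> I" if "c \<in> I" for c
    using tr f that I by (simp add: is_trace_ideal_iff)
  have sub: "ideal_pow I (Suc k) \<subseteq> I"
    using ideal_pow_subset[OF I] by simp
  from b show ?thesis
    unfolding ideal_pow_Suc[of I k]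
  proof (induction rule: ideal_gen_induct)
    case zero
    show ?case
      using linear_on_0[OF I f] is_ideal_0[OF is_ideal_ideal_gen] by simp
  next
    case (add x y)
    then have "f (x + y) = f x + f y"
      using f sub unfolding linear_on_def ideal_pow_Suc by blast
    then show ?case
      using add is_ideal_add[OF is_ideal_ideal_gen] by simp
  next
    case (mult r x)
    then have "f (r * x) = r * f x"
      using f sub unfolding linear_on_def ideal_pow_Suc by blast
    then show ?case
      using mult is_ideal_mult_left[OF is_ideal_ideal_gen] by simp
  next
    case (gen s)
    then obtain c d where s: "s = c * d" and c: "c \<in> I" and d: "d \<in> ideal_pow I k"
      by blast
    then have "f s = f (d * c)"
      by (simp add: mult.commute)
    also have "\<dots> = d * f c"
      using f c unfolding linear_on_def by blast
    finally have "f s = f c * d"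
      by (simp add: mult.commute)
    then show ?case
      using mult_mem_ideal_pow_Suc[OF f_I[OF c] d] by (simp add: ideal_pow_Suc)
  qed
qed

text \<open>The term \<open>b x\<^sup>p\<close> after \<open>k\<close> applications of \<open>f\<close>, each of which turns one factor \<open>x\<close>
  into \<open>f x\<close> or, once no \<open>x\<close> is left, applies \<open>f\<close> to the coefficient.\<close>

definition transport_term :: "('a::comm_ring_1 \<Rightarrow> 'a) \<Rightarrow> 'a \<Rightarrow> nat \<Rightarrow> 'a \<Rightarrow> nat \<Rightarrow> 'a" where
  "transport_term f x k b p =
     (if p \<le> k then (f ^^ (k - p)) b * f x ^ p else b * x ^ (p - k) * f x ^ k)"

lemma transport_term_0: "transport_term f x 0 b p = b * x ^ p"
  by (simp add: transport_term_def)

lemma linear_on_transport_term: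
  assumes J: "is_ideal J" and f: "linear_on J f" and x: "x \<in> J"
    and coeff_mem: "p \<le> k \<Longrightarrow> (f ^^ (k - p)) b \<in> J"
  shows "transport_term f x k b p \<in> J"
    and "f (transport_term f x k b p) = transport_term f x (Suc k) b p"
proof -
  have f_mult: "f (r * w) = r * f w" if "w \<in> J" for r w
    using f that unfolding linear_on_def by blast
  have "transport_term f x k b p \<in> J \<and> f (transport_term f x k b p) = transport_term f x (Suc k) b p"
  proof (cases "p \<le> k")
    case True
    then have "transport_term f x k b p = f x ^ p * (f ^^ (k - p)) b"
      "transport_term f x (Suc k) b p = f x ^ p * f ((f ^^ (k - p)) b)"
      by (simp_all add: transport_term_def Suc_diff_le mult.commute)
    then show ?thesis
      using coeff_mem True f_mult is_ideal_mult_left[OF J] by simp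
  next
    case False
    define c where "c = b * x ^ (p - Suc k) * f x ^ k"
    have "p - k = Suc (p - Suc k)"
      using False by simp
    then have "transport_term f x k b p = c * x"
      using False by (simp add: transport_term_def c_def ac_simps)
    moreover have "transport_term f x (Suc k) b p = c * f x"
      using False by (cases "p = Suc k") (simp_all add: transport_term_def c_def ac_simps)
    ultimately show ?thesis
      using x f_mult is_ideal_mult_left[OF J] by simp
  qed
  then show "transport_term f x k b p \<in> J"
    and "f (transport_term f x k b p) = transport_term f x (Suc k) b p"
    by simp_all
qed

lemma linear_on_transports_integral_equation:
  assumes J: "is_ideal J" and f: "linear_on J f" and x: "x \<in> J"
    and a: "\<And>i j. i \<in> {1..n} \<Longrightarrow> (f ^^ j) (a i) \<in> J"
    and eq: "x ^ n + (\<Sum>i=1..n. a i * x ^ (n - i)) = 0"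
  shows "f x ^ n + (\<Sum>i=1..n. (f ^^ i) (a i) * f x ^ (n - i)) = 0"
proof -
  let ?t = "transport_term f x"
  define E where "E k = ?t k 1 n + (\<Sum>i=1..n. ?t k (a i) (n - i))" for k
  have "E k = 0" if "k \<le> n" for k
    using that
  proof (induction k)
    case 0
    then show ?case
      using eq by (simp add: E_def transport_term_0)
  next
    case (Suc k)
    note lead = linear_on_transport_term[OF J f x, of n k 1]
    note terms = linear_on_transport_term[OF J f x, of "n - _" k "a _"]
    have "(\<Sum>i=1..n. ?t k (a i) (n - i)) \<in> J"
      using a by (intro is_ideal_sum[OF J] terms(1)) auto
    then have "f (E k) = f (?t k 1 n) + f (\<Sum>i=1..n. ?t k (a i) (n - i))"
      using f lead(1) Suc.prems unfolding E_def linear_on_def by simp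
    also have "f (\<Sum>i=1..n. ?t k (a i) (n - i)) = (\<Sum>i=1..n. f (?t k (a i) (n - i)))"
      using a by (intro linear_on_sum[OF J f] terms(1)) auto
    also have "(\<Sum>i=1..n. f (?t k (a i) (n - i))) = (\<Sum>i=1..n. ?t (Suc k) (a i) (n - i))"
      using a by (intro sum.cong terms(2)) auto
    also have "f (?t k 1 n) = ?t (Suc k) 1 n"
      using Suc.prems by (intro lead(2)) simp
    finally have "f (E k) = E (Suc k)"
      by (simp add: E_def)
    then show ?case
      using Suc linear_on_0[OF J f] by simp
  qed
  moreover have "E n = f x ^ n + (\<Sum>i=1..n. (f ^^ i) (a i) * f x ^ (n - i))"
    unfolding E_def transport_term_def by (intro arg_cong2[where f = "(+)"] sum.cong) auto
  ultimately show ?thesis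
    by simp
qed

lemma trace_ideal_linear_on_integral_closure_closed:
  assumes tr: "is_trace_ideal I" and f: "linear_on (integral_closure_ideal I) f"
    and x: "x \<in> integral_closure_ideal I"
  shows "f x \<in> integral_closure_ideal I"
proof -
  have I: "is_ideal I"
    using tr by (simp add: is_trace_ideal_def)
  have I_sub: "I \<subseteq> integral_closure_ideal I"
    by (rule ideal_subset_integral_closure_ideal[OF I])
  obtain n a where n: "1 \<le> n" and a: "\<forall>i\<in>{1..n}. a i \<in> ideal_pow I i"
    and eq: "x ^ n + (\<Sum>i=1..n. a i * x ^ (n - i)) = 0"
    using x unfolding integral_closure_ideal_def by blast
  have iterates: "(f ^^ j) (a i) \<in> ideal_pow I i" if i: "i \<in> {1..n}" for i j
  proof -
    obtain l where l: "i = Suc l"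
      using i by (cases i) auto
    show ?thesis
    proof (induction j)
      case 0
      then show ?case using a i by simp
    next
      case (Suc j)
      then show ?case
        using trace_ideal_linear_on_ideal_pow_closed[OF tr linear_on_subset[OF f I_sub]] l by simp
    qed
  qed
  then have "(f ^^ j) (a i) \<in> integral_closure_ideal I" if "i \<in> {1..n}" for i j
    using that ideal_pow_subset[OF I] I_sub by fastforce
  then have "f x ^ n + (\<Sum>i=1..n. (f ^^ i) (a i) * f x ^ (n - i)) = 0"
    by (intro linear_on_transports_integral_equation[OF is_ideal_integral_closure_ideal f x _ eq])
  then show ?thesis
    unfolding integral_closure_ideal_def using n iterates
    by (intro CollectI exI[of _ n] conjI exI[of _ "\<lambda>i. (f ^^ i) (a i)"]) simp_all
qed

theorem theorem6p2:
  fixes m :: "'a::comm_ring_1 set" and I :: "'a set"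
  assumes "cohen_macaulay_local m"
    and "krull_dim TYPE('a) = 1"
    and "is_trace_ideal I"
  shows "is_trace_ideal (integral_closure_ideal I)"
  unfolding is_trace_ideal_iff[OF is_ideal_integral_closure_ideal]
  using trace_ideal_linear_on_integral_closure_closed[OF assms(3)] by blast

end
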